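(* Let $n\ge1$ and let $\mathcal{ORCT}_n$ be the semigroup of all full contractions of $[n]=\{1,\dots,n\}$ that are either order-preserving or order-reversing. Let $\textnormal{Reg}(\mathcal{ORCT}_n)$ be the set of regular elements of $\mathcal{ORCT}_n$. Then $$|\textnormal{Reg}(\mathcal{ORCT}_n)|=\frac{n(n-1)(2n-1)+6n}{3}-n.$$
   Context: $\mathcal{T}_n$ is the semigroup (under composition) of all maps $[n]\to[n]$. A map $\alpha\in\mathcal{T}_n$ is a contraction if $|x\alpha-y\alpha|\le |x-y|$ for all $x,y\in[n]$; it is order-preserving if $x\le y$ implies $x\alpha\le y\alpha$, and order-reversing if $x\le y$ implies $x\alpha\ge y\alpha$. $\mathcal{ORCT}_n$ is the set of contractions in $\mathcal{T}_n$ that are order-preserving or order-reversing; it is a subsemigroup of $\mathcal{T}_n$. An element $\alpha\in\mathcal{ORCT}_n$ is regular if there is $\beta\in\mathcal{ORCT}_n$ with $\alpha\beta\alpha=\alpha$. *)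

theory Defs
  imports Main "HOL-Library.FuncSet"
begin

text \<open>Full transformations of [n] = {1..n}, represented as extensional maps
  (value undefined outside {1..n}).\<close>
definition Tn :: "nat \<Rightarrow> (nat \<Rightarrow> nat) set" where
  "Tn n = {1..n} \<rightarrow>\<^sub>E {1..n}"

definition is_contraction :: "nat \<Rightarrow> (nat \<Rightarrow> nat) \<Rightarrow> bool" where
  "is_contraction n a \<longleftrightarrow> (\<forall>x\<in>{1..n}. \<forall>y\<in>{1..n}.
     \<bar>int (a x) - int (a y)\<bar> \<le> \<bar>int x - int y\<bar>)"

definition order_preserving :: "nat \<Rightarrow> (nat \<Rightarrow> nat) \<Rightarrow> bool" where
  "order_preserving n a \<longleftrightarrow> (\<forall>x\<in>{1..n}. \<forall>y\<in>{1..n}. x \<le> y \<longrightarrow> a x \<le> a y)"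

definition order_reversing :: "nat \<Rightarrow> (nat \<Rightarrow> nat) \<Rightarrow> bool" where
  "order_reversing n a \<longleftrightarrow> (\<forall>x\<in>{1..n}. \<forall>y\<in>{1..n}. x \<le> y \<longrightarrow> a x \<ge> a y)"

definition ORCT :: "nat \<Rightarrow> (nat \<Rightarrow> nat) set" where
  "ORCT n = {a \<in> Tn n. is_contraction n a \<and> (order_preserving n a \<or> order_reversing n a)}"

text \<open>Product in the semigroup: maps act on the right, x(ab) = (xa)b.\<close>
definition tmul :: "nat \<Rightarrow> (nat \<Rightarrow> nat) \<Rightarrow> (nat \<Rightarrow> nat) \<Rightarrow> (nat \<Rightarrow> nat)" where
  "tmul n a b = compose {1..n} b a"

definition Reg_ORCT :: "nat \<Rightarrow> (nat \<Rightarrow> nat) set" where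
  "Reg_ORCT n = {a \<in> ORCT n. \<exists>b \<in> ORCT n. tmul n (tmul n a b) a = a}"

end

theory Submission
  imports Defs
begin

text \<open>
  Split the regular elements f by comparing f 1 with f n. If f 1 = f n then f is constant, and
  each of the n constants is idempotent. Precomposing with the reversal x \<mapsto> n + 1 - x is an
  involution of the regular elements exchanging f 1 < f n with f n < f 1, so it remains to count
  the regular f with f 1 < f n, which are order-preserving. If f \<beta> f = f with \<beta> a contraction,
  then for an inner point y of the image interval of f, \<beta> maps y - 1, y, y + 1 to consecutive
  points, which forces the fibre of y to be the single point \<beta> y. Hence f is constant up to some
  p, then climbs with slope 1 to its maximum and stays there; conversely every such ramp is
  regular. A ramp whose image has n + 1 - j points is determined by its minimum and by p, each
  with j possible values, so |Reg(ORCT n)| = n + 2 (1 + 4 + ... + (n - 1) * (n - 1)).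
\<close>

lemma clamp_shift_slope:
  fixes lo hi s t x y :: nat
  assumes "x \<le> y"
  shows "max lo (min hi (x + s - t)) \<le> max lo (min hi (y + s - t))"
    and "max lo (min hi (y + s - t)) \<le> max lo (min hi (x + s - t)) + (y - x)"
  using assms by (auto simp: max_def min_def)

lemma discrete_ivt:
  fixes f :: "nat \<Rightarrow> nat"
  assumes "\<And>x. 1 \<le> x \<Longrightarrow> x < n \<Longrightarrow> f (Suc x) \<le> f x + 1"
    and "1 \<le> n" "f 1 \<le> v" "v \<le> f n"
  shows "\<exists>z\<in>{1..n}. f z = v"
  using assms
proof (induction n)
  case 0
  then show ?case by simp
next
  case (Suc n)
  show ?case
  proof (cases "1 \<le> n \<and> v \<le> f n")
    case True
    then show ?thesis
      using Suc by force
  next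
    case False
    have "f (Suc n) \<le> v"
    proof (cases "n = 0")
      case True
      then show ?thesis using Suc.prems(3) by simp
    next
      case False
      then have "f n < v"
        using \<open>\<not> (1 \<le> n \<and> v \<le> f n)\<close> by simp
      moreover have "f (Suc n) \<le> f n + 1"
        using False Suc.prems(1) by simp
      ultimately show ?thesis by simp
    qed
    then show ?thesis
      using Suc.prems(4) by (intro bexI[of _ "Suc n"]) auto
  qed
qed

lemma exists_change_point:
  assumes "1 \<le> n" "f 1 \<noteq> f n"
  shows "\<exists>p. 1 \<le> p \<and> p < n \<and> f p = f 1 \<and> f (Suc p) \<noteq> f 1"
  using assms
proof (induction n)
  case 0
  then show ?case by simp
next
  case (Suc n)
  show ?case
  proof (cases "1 \<le> n \<and> f n = f 1")
    case True
    then show ?thesis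
      using Suc.prems(2) by (intro exI[of _ n]) auto
  next
    case False
    then have "1 \<le> n" "f 1 \<noteq> f n"
      using Suc.prems by (cases n; auto)+
    then show ?thesis
      using Suc.IH less_SucI by blast
  qed
qed

lemma sum_of_squares: "6 * (\<Sum>j=1..m. j\<^sup>2) = m * (m + 1) * (2 * m + 1)" for m :: nat
  by (induction m) (simp_all add: algebra_simps power2_eq_square)

lemma tmul_apply: "x \<in> {1..n} \<Longrightarrow> tmul n a b x = b (a x)"
  by (simp add: tmul_def compose_def)

lemma Tn_apply: "f \<in> Tn n \<Longrightarrow> x \<in> {1..n} \<Longrightarrow> f x \<in> {1..n}"
  by (auto simp: Tn_def)

lemma Tn_eqI: "f \<in> Tn n \<Longrightarrow> g \<in> Tn n \<Longrightarrow> (\<And>x. x \<in> {1..n} \<Longrightarrow> f x = g x) \<Longrightarrow> f = g"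
  unfolding Tn_def by (rule PiE_ext)

lemma order_preservingD:
  "order_preserving n f \<Longrightarrow> x \<in> {1..n} \<Longrightarrow> y \<in> {1..n} \<Longrightarrow> x \<le> y \<Longrightarrow> f x \<le> f y"
  by (simp add: order_preserving_def)

lemma order_reversingD:
  "order_reversing n f \<Longrightarrow> x \<in> {1..n} \<Longrightarrow> y \<in> {1..n} \<Longrightarrow> x \<le> y \<Longrightarrow> f y \<le> f x"
  by (simp add: order_reversing_def)

lemma order_preserving_less_imp_less:
  "order_preserving n f \<Longrightarrow> x \<in> {1..n} \<Longrightarrow> y \<in> {1..n} \<Longrightarrow> f x < f y \<Longrightarrow> x < y"
  using order_preservingD[of n f y x] by (meson leI not_less)

lemma contraction_SucD:
  assumes "is_contraction n f" "x \<in> {1..n}" "Suc x \<in> {1..n}"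
  shows "f (Suc x) \<le> f x + 1" "f x \<le> f (Suc x) + 1"
  using assms unfolding is_contraction_def by fastforce+

lemma ORCT_Tn: "f \<in> ORCT n \<Longrightarrow> f \<in> Tn n"
  by (simp add: ORCT_def)

lemma tmul_Tn: "a \<in> Tn n \<Longrightarrow> b \<in> Tn n \<Longrightarrow> tmul n a b \<in> Tn n"
  by (auto simp: Tn_def tmul_def compose_def)

lemma is_contraction_tmul:
  assumes "a \<in> Tn n" "is_contraction n a" "is_contraction n b"
  shows "is_contraction n (tmul n a b)"
  unfolding is_contraction_def
proof (intro ballI)
  fix x y assume xy: "x \<in> {1..n}" "y \<in> {1..n}"
  then have "\<bar>int (b (a x)) - int (b (a y))\<bar> \<le> \<bar>int (a x) - int (a y)\<bar>"
    using assms(1,3) Tn_apply unfolding is_contraction_def by blast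
  also have "\<dots> \<le> \<bar>int x - int y\<bar>"
    using assms(2) xy unfolding is_contraction_def by blast
  finally show "\<bar>int (tmul n a b x) - int (tmul n a b y)\<bar> \<le> \<bar>int x - int y\<bar>"
    using xy by (simp add: tmul_apply)
qed

lemma monotone_tmul:
  assumes "a \<in> Tn n"
    and "order_preserving n a \<or> order_reversing n a"
    and "order_preserving n b \<or> order_reversing n b"
  shows "order_preserving n (tmul n a b) \<or> order_reversing n (tmul n a b)"
proof -
  note a_range = Tn_apply[OF assms(1)]
  from assms(2,3) consider
      "order_preserving n a" "order_preserving n b"
    | "order_preserving n a" "order_reversing n b"
    | "order_reversing n a" "order_preserving n b"
    | "order_reversing n a" "order_reversing n b"
    by blast
  then show ?thesis
  proof cases
    case 1
    then have "order_preserving n (tmul n a b)"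
      using a_range unfolding order_preserving_def by (simp add: tmul_apply)
    then show ?thesis ..
  next
    case 2
    then have "order_reversing n (tmul n a b)"
      using a_range unfolding order_preserving_def order_reversing_def by (simp add: tmul_apply)
    then show ?thesis ..
  next
    case 3
    then have "order_reversing n (tmul n a b)"
      using a_range unfolding order_preserving_def order_reversing_def by (simp add: tmul_apply)
    then show ?thesis ..
  next
    case 4
    then have "order_preserving n (tmul n a b)"
      using a_range unfolding order_preserving_def order_reversing_def by (simp add: tmul_apply)
    then show ?thesis ..
  qed
qed

lemma tmul_ORCT: "a \<in> ORCT n \<Longrightarrow> b \<in> ORCT n \<Longrightarrow> tmul n a b \<in> ORCT n"
  unfolding ORCT_def using tmul_Tn is_contraction_tmul monotone_tmul by simp

lemma tmul_regular_iff:
  assumes f: "f \<in> Tn n" and b: "b \<in> Tn n"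
  shows "tmul n (tmul n f b) f = f \<longleftrightarrow> (\<forall>x\<in>{1..n}. f (b (f x)) = f x)"
proof -
  have app: "tmul n (tmul n f b) f x = f (b (f x))" if "x \<in> {1..n}" for x
    using that f by (simp add: tmul_apply Tn_apply)
  show ?thesis
  proof
    assume "tmul n (tmul n f b) f = f"
    then show "\<forall>x\<in>{1..n}. f (b (f x)) = f x" using app by metis
  next
    assume "\<forall>x\<in>{1..n}. f (b (f x)) = f x"
    then show "tmul n (tmul n f b) f = f"
      using Tn_eqI[OF tmul_Tn[OF tmul_Tn[OF f b] f] f] app by simp
  qed
qed

lemma Reg_ORCT_iff:
  "f \<in> Reg_ORCT n \<longleftrightarrow> f \<in> ORCT n \<and> (\<exists>b\<in>ORCT n. \<forall>x\<in>{1..n}. f (b (f x)) = f x)"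
  unfolding Reg_ORCT_def using tmul_regular_iff by (auto simp: ORCT_def)

definition rev_map :: "nat \<Rightarrow> nat \<Rightarrow> nat" where
  "rev_map n = restrict (\<lambda>x. n + 1 - x) {1..n}"

lemma rev_map_ORCT: "rev_map n \<in> ORCT n"
  by (auto simp: rev_map_def ORCT_def Tn_def is_contraction_def order_reversing_def)

lemma tmul_rev_map_apply: "x \<in> {1..n} \<Longrightarrow> tmul n (rev_map n) f x = f (n + 1 - x)"
  by (simp add: tmul_apply rev_map_def)

lemma tmul_rev_map_rev_map:
  assumes "f \<in> Tn n"
  shows "tmul n (rev_map n) (tmul n (rev_map n) f) = f"
proof (rule Tn_eqI[OF _ assms])
  have "rev_map n \<in> Tn n"
    using rev_map_ORCT by (rule ORCT_Tn)
  then show "tmul n (rev_map n) (tmul n (rev_map n) f) \<in> Tn n"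
    using assms by (simp add: tmul_Tn)
next
  fix x assume x: "x \<in> {1..n}"
  then have "n + 1 - x \<in> {1..n}" by auto
  then show "tmul n (rev_map n) (tmul n (rev_map n) f) x = f x"
    using x by (simp add: tmul_rev_map_apply)
qed

lemma tmul_rev_map_Reg_ORCT:
  assumes "f \<in> Reg_ORCT n"
  shows "tmul n (rev_map n) f \<in> Reg_ORCT n"
proof -
  obtain b where f: "f \<in> ORCT n" and b: "b \<in> ORCT n"
    and reg: "\<forall>x\<in>{1..n}. f (b (f x)) = f x"
    using assms unfolding Reg_ORCT_iff by blast
  \<comment> \<open>with \<rho> = rev_map n an involution, (\<rho> f) (b \<rho>) (\<rho> f) = \<rho> (f b f) = \<rho> f\<close>
  have "tmul n (rev_map n) f (tmul n b (rev_map n) (tmul n (rev_map n) f x))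
      = tmul n (rev_map n) f x" if x: "x \<in> {1..n}" for x
  proof -
    define y where "y = n + 1 - x"
    have y: "y \<in> {1..n}" using x by (auto simp: y_def)
    then have "f y \<in> {1..n}" "b (f y) \<in> {1..n}"
      using f b by (blast intro: Tn_apply ORCT_Tn)+
    then have "tmul n b (rev_map n) (f y) = n + 1 - b (f y)"
      "n + 1 - b (f y) \<in> {1..n}" "n + 1 - (n + 1 - b (f y)) = b (f y)"
      by (auto simp: tmul_apply rev_map_def)
    then have "tmul n (rev_map n) f (tmul n b (rev_map n) (f y)) = f (b (f y))"
      by (simp add: tmul_rev_map_apply)
    moreover have "tmul n (rev_map n) f x = f y"
      using x by (simp add: tmul_rev_map_apply y_def)
    ultimately show ?thesis
      using y reg by simp
  qed
  moreover have "tmul n b (rev_map n) \<in> ORCT n" "tmul n (rev_map n) f \<in> ORCT n"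
    using f b rev_map_ORCT by (simp_all add: tmul_ORCT)
  ultimately show ?thesis
    unfolding Reg_ORCT_iff by blast
qed

lemma bij_betw_tmul_rev_map:
  assumes "1 \<le> n"
  shows "bij_betw (tmul n (rev_map n)) {f \<in> Reg_ORCT n. f 1 < f n} {f \<in> Reg_ORCT n. f n < f 1}"
proof (rule bij_betw_byWitness)
  have ends: "tmul n (rev_map n) f 1 = f n" "tmul n (rev_map n) f n = f 1" for f
    using assms by (simp_all add: tmul_rev_map_apply)
  have Tn: "f \<in> Tn n" if "f \<in> Reg_ORCT n" for f
    using that by (simp add: Reg_ORCT_def ORCT_def)
  show "\<forall>f\<in>{f \<in> Reg_ORCT n. f 1 < f n}. tmul n (rev_map n) (tmul n (rev_map n) f) = f"
    "\<forall>f\<in>{f \<in> Reg_ORCT n. f n < f 1}. tmul n (rev_map n) (tmul n (rev_map n) f) = f"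
    using Tn tmul_rev_map_rev_map by auto
  show "tmul n (rev_map n) ` {f \<in> Reg_ORCT n. f 1 < f n} \<subseteq> {f \<in> Reg_ORCT n. f n < f 1}"
    "tmul n (rev_map n) ` {f \<in> Reg_ORCT n. f n < f 1} \<subseteq> {f \<in> Reg_ORCT n. f 1 < f n}"
    using ends tmul_rev_map_Reg_ORCT by auto
qed

definition const_map :: "nat \<Rightarrow> nat \<Rightarrow> nat \<Rightarrow> nat" where
  "const_map n c = restrict (\<lambda>_. c) {1..n}"

lemma const_map_ORCT: "c \<in> {1..n} \<Longrightarrow> const_map n c \<in> ORCT n"
  by (auto simp: const_map_def ORCT_def Tn_def is_contraction_def order_preserving_def)

lemma const_map_Reg_ORCT:
  assumes "c \<in> {1..n}"
  shows "const_map n c \<in> Reg_ORCT n"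
proof -
  have "\<forall>x\<in>{1..n}. const_map n c (const_map n c (const_map n c x)) = const_map n c x"
    using assms by (simp add: const_map_def)
  then show ?thesis
    unfolding Reg_ORCT_iff using const_map_ORCT[OF assms] by blast
qed

lemma ORCT_eq_const_map:
  assumes f: "f \<in> ORCT n" and "1 \<le> n" and ends: "f 1 = f n"
  shows "f = const_map n (f 1)"
proof (rule Tn_eqI[OF ORCT_Tn[OF f]])
  have "f 1 \<in> {1..n}"
    using Tn_apply[OF ORCT_Tn[OF f]] \<open>1 \<le> n\<close> by simp
  then show "const_map n (f 1) \<in> Tn n"
    by (intro ORCT_Tn const_map_ORCT)
next
  fix x assume x: "x \<in> {1..n}"
  have "1 \<in> {1..n}" "n \<in> {1..n}" "1 \<le> x" "x \<le> n"
    using \<open>1 \<le> n\<close> x by auto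
  moreover have "order_preserving n f \<or> order_reversing n f"
    using f by (simp add: ORCT_def)
  ultimately have "f 1 \<le> f x \<and> f x \<le> f n \<or> f n \<le> f x \<and> f x \<le> f 1"
    using x order_preservingD[of n f] order_reversingD[of n f] by meson
  then show "f x = const_map n (f 1) x"
    using x ends by (auto simp: const_map_def)
qed

lemma card_Reg_ORCT_const:
  assumes "1 \<le> n"
  shows "card {f \<in> Reg_ORCT n. f 1 = f n} = n"
proof -
  have "{f \<in> Reg_ORCT n. f 1 = f n} = const_map n ` {1..n}"
  proof
    show "{f \<in> Reg_ORCT n. f 1 = f n} \<subseteq> const_map n ` {1..n}"
    proof clarify
      fix f assume "f \<in> Reg_ORCT n" "f 1 = f n"
      then have "f \<in> ORCT n"
        by (simp add: Reg_ORCT_def)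
      moreover have "f 1 \<in> {1..n}"
        using Tn_apply[OF ORCT_Tn[OF \<open>f \<in> ORCT n\<close>]] assms by simp
      moreover have "f = const_map n (f 1)"
        using ORCT_eq_const_map \<open>f \<in> ORCT n\<close> assms \<open>f 1 = f n\<close> .
      ultimately show "f \<in> const_map n ` {1..n}"
        by (blast intro: image_eqI)
    qed
    show "const_map n ` {1..n} \<subseteq> {f \<in> Reg_ORCT n. f 1 = f n}"
      using const_map_Reg_ORCT assms by (simp add: image_subset_iff const_map_def)
  qed
  moreover have "inj_on (const_map n) {1..n}"
  proof (rule inj_onI)
    fix c d assume "const_map n c = const_map n d"
    then have "const_map n c 1 = const_map n d 1" by simp
    then show "c = d" using assms by (simp add: const_map_def)
  qed
  ultimately show ?thesis
    by (simp add: card_image)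
qed

lemma ORCT_mono_contractionI:
  assumes "f \<in> Tn n"
    and "\<And>x y. x \<in> {1..n} \<Longrightarrow> y \<in> {1..n} \<Longrightarrow> x \<le> y \<Longrightarrow> f x \<le> f y \<and> f y \<le> f x + (y - x)"
  shows "f \<in> ORCT n"
proof -
  have "\<bar>int (f x) - int (f y)\<bar> \<le> \<bar>int x - int y\<bar>" if "x \<in> {1..n}" "y \<in> {1..n}" for x y
    using assms(2)[OF that] assms(2)[OF that(2,1)] by (cases "x \<le> y") auto
  then show ?thesis
    using assms unfolding ORCT_def is_contraction_def order_preserving_def by auto
qed

definition ramp_params :: "nat \<Rightarrow> (nat \<times> nat \<times> nat) set" where
  "ramp_params n = (SIGMA j:{1..n-1}. {1..j} \<times> {1..j})"

definition ramp :: "nat \<Rightarrow> nat \<times> nat \<times> nat \<Rightarrow> nat \<Rightarrow> nat" where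
  "ramp n = (\<lambda>(j, a, p). restrict (\<lambda>x. max a (min (a + n - j) (x + a - p))) {1..n})"

lemma clamp_shift_ORCT:
  assumes "1 \<le> lo" "lo \<le> hi" "hi \<le> n"
  shows "restrict (\<lambda>x. max lo (min hi (x + s - t))) {1..n} \<in> ORCT n"
  using assms clamp_shift_slope by (intro ORCT_mono_contractionI) (auto simp: Tn_def)

lemma ramp_restrict: "ramp n (j, a, p) = restrict (\<lambda>x. max a (min (a + n - j) (x + a - p))) {1..n}"
  by (simp add: ramp_def)

lemma ramp_apply:
  "x \<in> {1..n} \<Longrightarrow> ramp n (j, a, p) x = max a (min (a + n - j) (x + a - p))"
  by (simp add: ramp_def)

lemma ramp_ORCT: "(j, a, p) \<in> ramp_params n \<Longrightarrow> ramp n (j, a, p) \<in> ORCT n"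
  unfolding ramp_restrict by (rule clamp_shift_ORCT) (auto simp: ramp_params_def)

lemma ramp_Reg_ORCT:
  assumes t: "(j, a, p) \<in> ramp_params n"
  shows "ramp n (j, a, p) \<in> Reg_ORCT n"
proof -
  define b where "b = restrict (\<lambda>y. max 1 (min n (y + p - a))) {1..n}"
  have "b \<in> ORCT n"
    unfolding b_def by (rule clamp_shift_ORCT) (use t in \<open>auto simp: ramp_params_def\<close>)
  moreover have "ramp n (j, a, p) (b (ramp n (j, a, p) x)) = ramp n (j, a, p) x"
    if x: "x \<in> {1..n}" for x
  proof -
    define y where "y = ramp n (j, a, p) x"
    have y: "a \<le> y" "y \<le> a + n - j"
      using x t by (auto simp: y_def ramp_apply ramp_params_def)
    then have "b y = y + p - a" "y + p - a \<in> {1..n}"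
      using t by (auto simp: b_def ramp_params_def)
    then show ?thesis
      using y by (simp add: ramp_apply flip: y_def)
  qed
  ultimately show ?thesis
    unfolding Reg_ORCT_iff using ramp_ORCT[OF t] by blast
qed

lemma ramp_ends:
  assumes "(j, a, p) \<in> ramp_params n"
  shows "ramp n (j, a, p) 1 = a" "ramp n (j, a, p) n = a + n - j" "a < a + n - j"
  using assms by (auto simp: ramp_def ramp_params_def)

lemma ramp_eq_plateau_le:
  assumes t: "(j, a, p) \<in> ramp_params n" and t': "(j, a, p') \<in> ramp_params n"
    and eq: "ramp n (j, a, p) = ramp n (j, a, p')"
  shows "p \<le> p'"
proof (rule ccontr)
  assume "\<not> p \<le> p'"
  moreover have "Suc p' \<in> {1..n}" "a + 1 \<le> a + n - j"
    using t t' by (auto simp: ramp_params_def)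
  ultimately have "ramp n (j, a, p) (Suc p') = a" "ramp n (j, a, p') (Suc p') = a + 1"
    by (auto simp: ramp_apply)
  then show False
    using eq by simp
qed

lemma inj_on_ramp: "inj_on (ramp n) (ramp_params n)"
proof (rule inj_onI)
  fix s s' assume "s \<in> ramp_params n" "s' \<in> ramp_params n" "ramp n s = ramp n s'"
  moreover obtain j a p j' a' p' where "s = (j, a, p)" "s' = (j', a', p')"
    by (cases s, cases s') auto
  ultimately have t: "(j, a, p) \<in> ramp_params n" and t': "(j', a', p') \<in> ramp_params n"
    and eq: "ramp n (j, a, p) = ramp n (j', a', p')"
    by simp_all
  have "a = a'"
    using ramp_ends(1)[OF t] ramp_ends(1)[OF t'] eq by simp
  moreover have "j = j'"
    using ramp_ends(2)[OF t] ramp_ends(2)[OF t'] eq t t' \<open>a = a'\<close>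
    by (auto simp: ramp_params_def)
  ultimately show "s = s'"
    using ramp_eq_plateau_le t t' eq \<open>s = (j, a, p)\<close> \<open>s' = (j', a', p')\<close>
    by (metis order_antisym)
qed

lemma regular_fibre_unique:
  fixes f \<beta> :: "nat \<Rightarrow> nat"
  assumes mono: "order_preserving n f" and f: "f \<in> Tn n"
    and \<beta>: "\<beta> \<in> Tn n" "is_contraction n \<beta>"
    and reg: "\<And>x. x \<in> {1..n} \<Longrightarrow> f (\<beta> (f x)) = f x"
    and u: "u \<in> {1..n}" "f u = y"
    and x: "x \<in> {1..n}" "f x = Suc y"
    and w: "w \<in> {1..n}" "f w = Suc (Suc y)"
  shows "x = \<beta> (Suc y)"
proof -
  \<comment> \<open>\<beta> y, \<beta> (Suc y), \<beta> (Suc (Suc y)) lie in the fibres of y, Suc y, Suc (Suc y), so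
    monotonicity of f and the contraction property of \<beta> make them consecutive\<close>
  have y: "y \<in> {1..n}" "Suc y \<in> {1..n}" "Suc (Suc y) \<in> {1..n}"
    using Tn_apply[OF f] u x w by metis+
  define t where "t = \<beta> (Suc y)"
  have t: "t \<in> {1..n}" "f t = Suc y"
    using Tn_apply[OF \<beta>(1) y(2)] reg[OF x(1)] x(2) by (simp_all add: t_def)
  have below: "\<beta> y \<in> {1..n}" "f (\<beta> y) = y"
    using Tn_apply[OF \<beta>(1) y(1)] reg[OF u(1)] u(2) by simp_all
  have above: "\<beta> (Suc (Suc y)) \<in> {1..n}" "f (\<beta> (Suc (Suc y))) = Suc (Suc y)"
    using Tn_apply[OF \<beta>(1) y(3)] reg[OF w(1)] w(2) by simp_all
  have "\<beta> y < t" "t \<le> \<beta> y + 1"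
    using order_preserving_less_imp_less[OF mono below(1) t(1)] below(2) t(2)
      contraction_SucD(1)[OF \<beta>(2) y(1,2)] by (simp_all add: t_def)
  then have pred_t: "\<beta> y = t - 1" by simp
  have "t < \<beta> (Suc (Suc y))" "\<beta> (Suc (Suc y)) \<le> t + 1"
    using order_preserving_less_imp_less[OF mono t(1) above(1)] above(2) t(2)
      contraction_SucD(1)[OF \<beta>(2) y(2,3)] by (simp_all add: t_def)
  then have succ_t: "\<beta> (Suc (Suc y)) = t + 1" by simp
  have "\<not> x < t"
  proof
    assume "x < t"
    then have "f x \<le> f (\<beta> y)"
      using order_preservingD[OF mono x(1) below(1)] pred_t by simp
    then show False using below(2) x(2) by simp
  qed
  moreover have "\<not> t < x"
  proof
    assume "t < x"
    then have "f (\<beta> (Suc (Suc y))) \<le> f x"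
      using order_preservingD[OF mono above(1) x(1)] succ_t by simp
    then show False using above(2) x(2) by simp
  qed
  ultimately show ?thesis
    by (simp add: t_def)
qed

lemma regular_flat_extremal:
  fixes f \<beta> :: "nat \<Rightarrow> nat"
  assumes mono: "order_preserving n f" and f: "f \<in> Tn n" "is_contraction n f"
    and \<beta>: "\<beta> \<in> Tn n" "is_contraction n \<beta>"
    and reg: "\<And>x. x \<in> {1..n} \<Longrightarrow> f (\<beta> (f x)) = f x"
    and x: "1 \<le> x" "x < n" and flat: "f (Suc x) = f x"
  shows "f x = f 1 \<or> f x = f n"
proof (rule ccontr)
  assume "\<not> (f x = f 1 \<or> f x = f n)"
  moreover have "f 1 \<le> f x" "f x \<le> f n"
    using order_preservingD[OF mono] x by auto
  ultimately have "f 1 < f x" "f x < f n"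
    by auto
  then obtain y where y: "f x = Suc y" "f 1 \<le> y" "Suc (Suc y) \<le> f n"
    by (cases "f x") auto
  have step: "f (Suc z) \<le> f z + 1" if "1 \<le> z" "z < n" for z
    using contraction_SucD(1)[OF f(2)] that by simp
  obtain u where u: "u \<in> {1..n}" "f u = y"
    using discrete_ivt[of n f, OF step, of y] y x by auto
  obtain w where w: "w \<in> {1..n}" "f w = Suc (Suc y)"
    using discrete_ivt[of n f, OF step, of "Suc (Suc y)"] y x by auto
  have "x \<in> {1..n}" "Suc x \<in> {1..n}" "f (Suc x) = Suc y"
    using x y flat by auto
  then have "x = \<beta> (Suc y)" "Suc x = \<beta> (Suc y)"
    using regular_fibre_unique[OF mono f(1) \<beta> reg u _ _ w] y(1) by blast+
  then show False by simp
qed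

lemma unit_step_shape:
  fixes f :: "nat \<Rightarrow> nat"
  assumes mono: "order_preserving n f"
    and step: "\<And>x. 1 \<le> x \<Longrightarrow> x < n \<Longrightarrow> f (Suc x) \<le> f x + 1"
    and flat: "\<And>x. 1 \<le> x \<Longrightarrow> x < n \<Longrightarrow> f (Suc x) = f x \<Longrightarrow> f x = f 1 \<or> f x = f n"
    and p: "1 \<le> p" "f p = f 1" "f (Suc p) \<noteq> f 1"
    and ends: "f 1 < f n"
  shows "p + k \<le> n \<Longrightarrow> f (p + k) = min (f n) (f 1 + k)"
proof (induction k)
  case 0
  then show ?case using p ends by simp
next
  case (Suc k)
  then have IH: "f (p + k) = min (f n) (f 1 + k)"
    by simp
  have range: "p + k \<in> {1..n}" "Suc (p + k) \<in> {1..n}" "n \<in> {1..n}"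
    using Suc.prems p by auto
  have le: "f (p + k) \<le> f (Suc (p + k))" "f (Suc (p + k)) \<le> f n"
    using order_preservingD[OF mono] range by auto
  show ?case
  proof (cases "f (p + k) = f n")
    case True
    then show ?thesis using IH le by auto
  next
    case False
    then have rising: "f (p + k) = f 1 + k"
      using IH by linarith
    have "f (Suc (p + k)) \<noteq> f (p + k)"
    proof (cases k)
      case 0
      then show ?thesis using p by simp
    next
      case (Suc m)
      then show ?thesis
        using flat[of "p + k"] range rising False by auto
    qed
    then have "f (Suc (p + k)) = f 1 + Suc k"
      using le(1) step[of "p + k"] range rising by auto
    then show ?thesis
      using le(2) by simp
  qed
qed

lemma eq_ramp_if_rising:
  assumes f: "f \<in> Tn n" and mono: "order_preserving n f"
    and p: "1 \<le> p" "p < n" "f p = f 1"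
    and rising: "\<And>k. p + k \<le> n \<Longrightarrow> f (p + k) = min (f n) (f 1 + k)"
    and ends: "f 1 < f n"
  shows "(n - (f n - f 1), f 1, p) \<in> ramp_params n" "f = ramp n (n - (f n - f 1), f 1, p)"
proof -
  define a c j where "a = f 1" and "c = f n" and "j = n - (c - a)"
  have bounds: "1 \<le> a" "a < c" "c \<le> n"
    using Tn_apply[OF f] p ends by (auto simp: a_def c_def)
  then have top: "a + n - j = c"
    by (simp add: j_def)
  have "c \<le> a + (n - p)"
    using rising[of "n - p"] p by (simp add: a_def c_def)
  then show t: "(n - (f n - f 1), f 1, p) \<in> ramp_params n"
    using bounds p by (auto simp: ramp_params_def a_def c_def)
  show "f = ramp n (n - (f n - f 1), f 1, p)"
  proof (rule Tn_eqI[OF f ramp_ORCT[OF t, THEN ORCT_Tn]])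
    fix x assume x: "x \<in> {1..n}"
    show "f x = ramp n (n - (f n - f 1), f 1, p) x"
    proof (cases "x \<le> p")
      case True
      then have "f x = a"
        using order_preservingD[OF mono, of 1 x] order_preservingD[OF mono, of x p] x p
        by (auto simp: a_def)
      then show ?thesis
        using x True by (simp add: ramp_apply a_def)
    next
      case False
      then have "f x = min c (a + (x - p))" "x + a - p = a + (x - p)"
        using rising[of "x - p"] x by (simp_all add: a_def c_def)
      then show ?thesis
        using x bounds top by (simp add: ramp_apply a_def c_def j_def)
    qed
  qed
qed

lemma Reg_ORCT_increasing_is_ramp:
  assumes f: "f \<in> Reg_ORCT n" and "1 \<le> n" and ends: "f 1 < f n"
  shows "\<exists>t\<in>ramp_params n. f = ramp n t"
proof -
  obtain \<beta> where fO: "f \<in> ORCT n" and \<beta>: "\<beta> \<in> ORCT n"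
    and reg: "\<And>x. x \<in> {1..n} \<Longrightarrow> f (\<beta> (f x)) = f x"
    using f unfolding Reg_ORCT_iff by blast
  have "order_preserving n f \<or> order_reversing n f"
    using fO by (simp add: ORCT_def)
  then have mono: "order_preserving n f"
    using ends order_reversingD[of n f 1 n] \<open>1 \<le> n\<close> by fastforce
  have fT: "f \<in> Tn n" "is_contraction n f" and \<beta>T: "\<beta> \<in> Tn n" "is_contraction n \<beta>"
    using fO \<beta> by (simp_all add: ORCT_def)
  have step: "f (Suc x) \<le> f x + 1" if "1 \<le> x" "x < n" for x
    using contraction_SucD(1)[OF fT(2)] that by simp
  have flat: "f x = f 1 \<or> f x = f n" if "1 \<le> x" "x < n" "f (Suc x) = f x" for x
    using regular_flat_extremal[OF mono fT \<beta>T reg that] .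
  obtain p where p: "1 \<le> p" "p < n" "f p = f 1" "f (Suc p) \<noteq> f 1"
    using exists_change_point[of n f] \<open>1 \<le> n\<close> ends by auto
  have "f (p + k) = min (f n) (f 1 + k)" if "p + k \<le> n" for k
    by (rule unit_step_shape[OF mono step flat p(1,3,4) ends that])
  then show ?thesis
    using eq_ramp_if_rising[OF fT(1) mono p(1-3) _ ends] by blast
qed

lemma Reg_ORCT_increasing_eq:
  assumes "1 \<le> n"
  shows "{f \<in> Reg_ORCT n. f 1 < f n} = ramp n ` ramp_params n"
proof
  show "{f \<in> Reg_ORCT n. f 1 < f n} \<subseteq> ramp n ` ramp_params n"
  proof clarify
    fix f assume "f \<in> Reg_ORCT n" "f 1 < f n"
    then obtain t where "t \<in> ramp_params n" "f = ramp n t"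
      using Reg_ORCT_increasing_is_ramp assms by blast
    then show "f \<in> ramp n ` ramp_params n"
      by simp
  qed
  show "ramp n ` ramp_params n \<subseteq> {f \<in> Reg_ORCT n. f 1 < f n}"
  proof (rule image_subsetI)
    fix t assume "t \<in> ramp_params n"
    moreover obtain j a p where "t = (j, a, p)"
      by (cases t) auto
    ultimately show "ramp n t \<in> {f \<in> Reg_ORCT n. f 1 < f n}"
      using ramp_Reg_ORCT ramp_ends by simp
  qed
qed

lemma card_ramp_params: "card (ramp_params n) = (\<Sum>j=1..n-1. j\<^sup>2)"
  by (simp add: ramp_params_def power2_eq_square)

lemma card_Reg_ORCT:
  assumes "1 \<le> n"
  shows "card (Reg_ORCT n) = n + 2 * (\<Sum>j=1..n-1. j\<^sup>2)"
proof -
  let ?C = "{f \<in> Reg_ORCT n. f 1 = f n}"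
  let ?I = "{f \<in> Reg_ORCT n. f 1 < f n}"
  let ?D = "{f \<in> Reg_ORCT n. f n < f 1}"
  have "finite (Tn n)"
    by (simp add: Tn_def finite_PiE)
  moreover have "Reg_ORCT n \<subseteq> Tn n"
    unfolding Reg_ORCT_def using ORCT_Tn by blast
  ultimately have "finite (Reg_ORCT n)"
    by (rule rev_finite_subset)
  then have fin: "finite ?C" "finite ?I" "finite ?D"
    by simp_all
  have "card (Reg_ORCT n) = card (?C \<union> (?I \<union> ?D))"
    by (rule arg_cong[where f = card]) auto
  also have "\<dots> = card ?C + card (?I \<union> ?D)"
    by (rule card_Un_disjoint) (use fin in auto)
  also have "card (?I \<union> ?D) = card ?I + card ?D"
    by (rule card_Un_disjoint) (use fin in auto)
  finally have "card (Reg_ORCT n) = card ?C + (card ?I + card ?D)" .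
  moreover have "card ?D = card ?I"
    using bij_betw_tmul_rev_map[OF assms] by (simp add: bij_betw_same_card)
  moreover have "card ?I = (\<Sum>j=1..n-1. j\<^sup>2)"
    using Reg_ORCT_increasing_eq[OF assms] inj_on_ramp
    by (simp add: card_image card_ramp_params)
  ultimately show ?thesis
    using card_Reg_ORCT_const[OF assms] by simp
qed

theorem corollary3:
  fixes n :: nat
  assumes "n \<ge> 1"
  shows "int (card (Reg_ORCT n)) =
           (int n * (int n - 1) * (2 * int n - 1) + 6 * int n) div 3 - int n"
proof -
  obtain m where n: "n = Suc m"
    using assms by (cases n) auto
  define s where "s = (\<Sum>j=1..m. j\<^sup>2)"
  have "6 * s = m * (m + 1) * (2 * m + 1)"
    unfolding s_def by (rule sum_of_squares)
  then have "int (6 * s) = int (m * (m + 1) * (2 * m + 1))"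
    by (simp only:)
  then have "6 * int s = int m * (int m + 1) * (2 * int m + 1)"
    by (simp add: algebra_simps)
  then have "int n * (int n - 1) * (2 * int n - 1) + 6 * int n = 3 * (2 * int s + 2 * int n)"
    by (simp add: n algebra_simps)
  moreover have "card (Reg_ORCT n) = n + 2 * s"
    using card_Reg_ORCT[OF assms] by (simp add: n s_def)
  ultimately show ?thesis
    by simp
qed

end
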